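(* Let $R$, $G$, $*$, $\sigma$ and $\mathcal{S}$ be as in the context, and suppose $\mathcal{S}$ is anticommutative. Then: - for all $x,y\in G$, we have $xy=yx$ if and only if $x^*y=yx^*$; - if moreover $x,y\in G\setminus G_*$ and $xy=yx$, then $xy=yx=x^*y^*=y^*x^*$ and $xy^*=y^*x=x^*y=yx^*$, and $2(1+\sigma(xy))=0=2(\sigma(x)+\sigma(y))$ in $R$.
   Context: Throughout, $R$ is a commutative ring with unity with $\operatorname{char}(R)\neq 2$, and $\mathcal{U}(R)$ is its unit group. $G$ is a group with an involution $*$, i.e. a map $x\mapsto x^*$ with $(xy)^*=y^*x^*$ and $(x^* )^*=x$. The map $\sigma:G\to\mathcal{U}(R)$ is a nontrivial group homomorphism with kernel $N=\ker\sigma$, and it is compatible with $*$: $xx^*\in N$ for all $x\in G$. The group ring $RG$ carries the involution $\left(\sum_{x\in G}\alpha_x x\right)^{\sigma*}=\sum_{x\in G}\sigma(x)\alpha_x x^*$. Write $G_*=\{x\in G: x^*=x\}$ and $N_*=G_*\cap N$. Let $\mathcal{S}$ be the $R$-submodule of $RG$ spanned by the union of the following three sets: - $2\mathcal{S}_1=\{2x: x\in N_*\}$; - $\mathcal{S}_2=\{\alpha x: x\in G_*\setminus N,\ \alpha\in R,\ \alpha(1-\sigma(x))=0\}$; - $\mathcal{S}_3=\{x+\sigma(x)x^*: x\in G\setminus G_*\}$. $\mathcal{S}$ is called anticommutative if $ab+ba=0$ for all $a,b\in\mathcal{S}$. *)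

theory Defs
  imports "HOL-Algebra.Group"
begin

text \<open>The group ring RG is modelled as functions G \<Rightarrow> R (finitely supported on carrier G
for the elements that occur). gdelta x is the basis element x of RG.\<close>

definition gdelta :: "'g \<Rightarrow> 'g \<Rightarrow> 'r::comm_ring_1" where
  "gdelta x = (\<lambda>z. if z = x then 1 else 0)"

definition gr_mult :: "('g, 'b) monoid_scheme \<Rightarrow> ('g \<Rightarrow> 'r::comm_ring_1) \<Rightarrow> ('g \<Rightarrow> 'r) \<Rightarrow> 'g \<Rightarrow> 'r" where
  "gr_mult G f h = (\<lambda>z. \<Sum>x\<in>{x\<in>carrier G. f x \<noteq> 0}. f x * h (inv\<^bsub>G\<^esub> x \<otimes>\<^bsub>G\<^esub> z))"

text \<open>The R-submodule S of RG spanned by 2S_1, S_2 and S_3.\<close>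
inductive_set S_span :: "('g, 'b) monoid_scheme \<Rightarrow> ('g \<Rightarrow> 'g) \<Rightarrow> ('g \<Rightarrow> 'r::comm_ring_1)
    \<Rightarrow> ('g \<Rightarrow> 'r) set"
  for G star \<sigma> where
  zero: "(\<lambda>_. 0) \<in> S_span G star \<sigma>"
| gen1: "\<lbrakk>x \<in> carrier G; star x = x; \<sigma> x = 1\<rbrakk>
          \<Longrightarrow> (\<lambda>z. 2 * gdelta x z) \<in> S_span G star \<sigma>"
| gen2: "\<lbrakk>x \<in> carrier G; star x = x; \<sigma> x \<noteq> 1; \<alpha> * (1 - \<sigma> x) = 0\<rbrakk>
          \<Longrightarrow> (\<lambda>z. \<alpha> * gdelta x z) \<in> S_span G star \<sigma>"
| gen3: "\<lbrakk>x \<in> carrier G; star x \<noteq> x\<rbrakk>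
          \<Longrightarrow> (\<lambda>z. gdelta x z + \<sigma> x * gdelta (star x) z) \<in> S_span G star \<sigma>"
| add: "\<lbrakk>a \<in> S_span G star \<sigma>; b \<in> S_span G star \<sigma>\<rbrakk>
          \<Longrightarrow> (\<lambda>z. a z + b z) \<in> S_span G star \<sigma>"
| smult: "a \<in> S_span G star \<sigma> \<Longrightarrow> (\<lambda>z. c * a z) \<in> S_span G star \<sigma>"

definition S_anticomm :: "('g, 'b) monoid_scheme \<Rightarrow> ('g \<Rightarrow> 'g) \<Rightarrow> ('g \<Rightarrow> 'r::comm_ring_1) \<Rightarrow> bool" where
  "S_anticomm G star \<sigma> \<longleftrightarrow>
     (\<forall>a\<in>S_span G star \<sigma>. \<forall>b\<in>S_span G star \<sigma>.
        (\<lambda>z. gr_mult G a b z + gr_mult G b a z) = (\<lambda>_. 0))"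

end

theory Submission
  imports Defs
begin

text \<open>For non-symmetric x and y the elements x + \<sigma>(x) x* and y + \<sigma>(y) y* lie in S, and
  their anticommutator is a sum of eight group elements with coefficients 1, \<sigma>(x), \<sigma>(y) and
  \<sigma>(x)\<sigma>(y). Evaluating this vanishing sum at one of the eight products, its coefficient must
  cancel against those of other products equal to it; since 2 and the units \<sigma>(g) are nonzero,
  this forces the coincidences between the products. Commutation of x* with a symmetric y is
  reduced to the non-symmetric case by replacing y with xy.\<close>

locale anticommutative_span = group G for G :: "'g monoid" (structure) +
  fixes star :: "'g \<Rightarrow> 'g" and \<sigma> :: "'g \<Rightarrow> 'r::comm_ring_1"
  assumes two_nonzero: "(2::'r) \<noteq> 0"
    and star_closed: "x \<in> carrier G \<Longrightarrow> star x \<in> carrier G"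
    and star_mult: "x \<in> carrier G \<Longrightarrow> y \<in> carrier G \<Longrightarrow> star (x \<otimes> y) = star y \<otimes> star x"
    and star_star: "x \<in> carrier G \<Longrightarrow> star (star x) = x"
    and sigma_unit: "x \<in> carrier G \<Longrightarrow> \<sigma> x dvd 1"
    and anticomm: "S_anticomm G star \<sigma>"
begin

definition S3_gen :: "'g \<Rightarrow> 'g \<Rightarrow> 'r" where
  "S3_gen x = (\<lambda>z. gdelta x z + \<sigma> x * gdelta (star x) z)"

lemma S3_gen_in_S_span: "x \<in> carrier G \<Longrightarrow> star x \<noteq> x \<Longrightarrow> S3_gen x \<in> S_span G star \<sigma>"
  unfolding S3_gen_def by (rule S_span.gen3)

lemma two_mult_sigma_nonzero:
  assumes x: "x \<in> carrier G"
  shows "2 * \<sigma> x \<noteq> 0"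
proof
  assume h: "2 * \<sigma> x = 0"
  from sigma_unit[OF x] obtain w where "1 = \<sigma> x * w" by (auto elim: dvdE)
  then have "(2::'r) = 2 * \<sigma> x * w" by (simp add: mult.assoc)
  with h two_nonzero show False by simp
qed

lemma sigma_nonzero: "x \<in> carrier G \<Longrightarrow> \<sigma> x \<noteq> 0"
  using two_mult_sigma_nonzero by force

lemma gr_mult_S3_gen:
  assumes x: "x \<in> carrier G"
  shows "gr_mult G (S3_gen x) h z = h (inv x \<otimes> z) + \<sigma> x * h (inv (star x) \<otimes> z)"
proof -
  let ?g = "\<lambda>w. S3_gen x w * h (inv w \<otimes> z)"
  have "gr_mult G (S3_gen x) h z = sum ?g {w \<in> carrier G. S3_gen x w \<noteq> 0}"
    by (simp add: gr_mult_def)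
  also have "\<dots> = sum ?g {x, star x}"
    by (rule sum.mono_neutral_left) (auto simp: S3_gen_def gdelta_def x star_closed)
  also have "\<dots> = h (inv x \<otimes> z) + \<sigma> x * h (inv (star x) \<otimes> z)"
    by (cases "star x = x") (auto simp: S3_gen_def gdelta_def algebra_simps)
  finally show ?thesis .
qed

lemma S3_gen_inv_mult:
  assumes "a \<in> carrier G" "b \<in> carrier G" "z \<in> carrier G"
  shows "S3_gen a (inv b \<otimes> z) = gdelta (b \<otimes> a) z + \<sigma> a * gdelta (b \<otimes> star a) z"
  using assms star_closed by (simp add: S3_gen_def gdelta_def inv_solve_left')

lemma anticomm_S3_gen:
  assumes x: "x \<in> carrier G" and y: "y \<in> carrier G"
    and nx: "star x \<noteq> x" and ny: "star y \<noteq> y" and z: "z \<in> carrier G"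
  shows "gdelta (x \<otimes> y) z + \<sigma> y * gdelta (x \<otimes> star y) z
       + \<sigma> x * gdelta (star x \<otimes> y) z + \<sigma> x * \<sigma> y * gdelta (star x \<otimes> star y) z
       + gdelta (y \<otimes> x) z + \<sigma> x * gdelta (y \<otimes> star x) z
       + \<sigma> y * gdelta (star y \<otimes> x) z + \<sigma> x * \<sigma> y * gdelta (star y \<otimes> star x) z = (0::'r)"
proof -
  have "(\<lambda>z. gr_mult G (S3_gen x) (S3_gen y) z + gr_mult G (S3_gen y) (S3_gen x) z) = (\<lambda>_. 0)"
    using anticomm S3_gen_in_S_span[OF x nx] S3_gen_in_S_span[OF y ny]
    unfolding S_anticomm_def by blast
  then have "gr_mult G (S3_gen x) (S3_gen y) z + gr_mult G (S3_gen y) (S3_gen x) z = 0"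
    by metis
  then show ?thesis
    using x y z star_closed
    by (simp add: gr_mult_S3_gen S3_gen_inv_mult distrib_left mult.assoc add.assoc
        mult.left_commute)
qed

lemmas anticomm_S3_gen_cases = anticomm_S3_gen[unfolded gdelta_def]

lemma commute_imp_stars_commute:
  assumes "x \<in> carrier G" "y \<in> carrier G" "x \<otimes> y = y \<otimes> x"
  shows "star x \<otimes> star y = star y \<otimes> star x"
  using star_mult[OF assms(1,2)] star_mult[OF assms(2,1)] assms(3) by simp

lemma commuting_nonsym_eq_star_mult:
  assumes x: "x \<in> carrier G" and y: "y \<in> carrier G"
    and nx: "star x \<noteq> x" and ny: "star y \<noteq> y" and xy: "x \<otimes> y = y \<otimes> x"
  shows "x \<otimes> y = star x \<otimes> star y" and "2 * (1 + \<sigma> x * \<sigma> y) = 0"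
proof -
  have sx: "star x \<in> carrier G" and sy: "star y \<in> carrier G"
    using star_closed x y by auto
  have stars: "star y \<otimes> star x = star x \<otimes> star y"
    using commute_imp_stars_commute[OF x y xy] by simp
  have distinct: "x \<otimes> y \<noteq> y \<otimes> star x" "x \<otimes> y \<noteq> star y \<otimes> x"
    "x \<otimes> y \<noteq> x \<otimes> star y" "x \<otimes> y \<noteq> star x \<otimes> y"
    using xy nx ny x y sx sy by (auto dest: sym)
  note E = anticomm_S3_gen_cases[OF x y nx ny m_closed[OF x y]]
  show xy_star: "x \<otimes> y = star x \<otimes> star y"
  proof (rule ccontr)
    assume "x \<otimes> y \<noteq> star x \<otimes> star y"
    with E distinct xy stars have "(2::'r) = 0" by (simp add: one_add_one)
    with two_nonzero show False ..
  qed
  from E distinct xy stars xy_star have "1 + 1 + 2 * (\<sigma> x * \<sigma> y) = (0::'r)"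
    by (simp add: algebra_simps)
  then show "2 * (1 + \<sigma> x * \<sigma> y) = 0"
    by (simp add: algebra_simps)
qed

lemma nonsym_commute_star:
  assumes x: "x \<in> carrier G" and nx: "star x \<noteq> x"
  shows "x \<otimes> star x = star x \<otimes> x"
proof (rule ccontr)
  assume noncomm: "x \<otimes> star x \<noteq> star x \<otimes> x"
  have sx: "star x \<in> carrier G" using star_closed[OF x] .
  have "x \<otimes> star x \<noteq> x \<otimes> x" "x \<otimes> star x \<noteq> star x \<otimes> star x"
    using nx nx[symmetric] x sx by simp_all
  with anticomm_S3_gen_cases[OF x x nx nx m_closed[OF x sx]] noncomm
  have "\<sigma> x + \<sigma> x = 0" by simp
  then have "2 * \<sigma> x = 0" by (metis mult_2)
  with two_mult_sigma_nonzero[OF x] show False ..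
qed

lemma commuting_nonsym_mixed_products:
  assumes x: "x \<in> carrier G" and y: "y \<in> carrier G"
    and nx: "star x \<noteq> x" and ny: "star y \<noteq> y" and xy: "x \<otimes> y = y \<otimes> x"
  shows "x \<otimes> star y = star x \<otimes> y" and "star y \<otimes> x = x \<otimes> star y"
    and "x \<otimes> star y = y \<otimes> star x" and "2 * (\<sigma> x + \<sigma> y) = 0"
proof -
  have sx: "star x \<in> carrier G" and sy: "star y \<in> carrier G"
    using star_closed x y by auto
  have xy_star: "x \<otimes> y = star x \<otimes> star y"
    using commuting_nonsym_eq_star_mult(1)[OF x y nx ny xy] .
  have stars: "star y \<otimes> star x = x \<otimes> y"
    using commute_imp_stars_commute[OF x y xy] xy_star by simp
  have xx_star: "x \<otimes> x = star x \<otimes> star x"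
    using commuting_nonsym_eq_star_mult(1)[OF x x nx nx refl] .
  have cx: "x \<otimes> star x = star x \<otimes> x" using nonsym_commute_star[OF x nx] .
  have "star x \<otimes> (x \<otimes> star y) = (x \<otimes> star x) \<otimes> star y"
    using x sx sy cx by (simp add: m_assoc)
  also have "\<dots> = x \<otimes> (x \<otimes> y)" using x sx sy xy_star by (simp add: m_assoc)
  also have "\<dots> = star x \<otimes> (star x \<otimes> y)" using x y sx xx_star by (simp add: m_assoc[symmetric])
  finally show mixed: "x \<otimes> star y = star x \<otimes> y" using x y sx sy by simp
  have "(star y \<otimes> x) \<otimes> star x = (star y \<otimes> star x) \<otimes> x"
    using x sx sy cx by (simp add: m_assoc)
  also have "\<dots> = x \<otimes> (x \<otimes> y)" using x y stars xy[symmetric] by (simp add: m_assoc)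
  also have "\<dots> = (x \<otimes> star y) \<otimes> star x" using x y sx sy stars by (simp add: m_assoc)
  finally show swap: "star y \<otimes> x = x \<otimes> star y" using x y sx sy by simp
  have distinct: "x \<otimes> star y \<noteq> x \<otimes> y" "y \<otimes> star x \<noteq> y \<otimes> x"
    using x y sx sy nx ny by auto
  note facts = distinct mixed[symmetric] swap stars xy_star[symmetric] xy[symmetric]
  show mixed': "x \<otimes> star y = y \<otimes> star x"
  proof (rule ccontr)
    assume "x \<otimes> star y \<noteq> y \<otimes> star x"
    with anticomm_S3_gen_cases[OF x y nx ny m_closed[OF y sx]] facts have "\<sigma> x = 0" by simp
    with sigma_nonzero[OF x] show False ..
  qed
  from anticomm_S3_gen_cases[OF x y nx ny m_closed[OF x sy]] facts mixed'
  have "\<sigma> y + \<sigma> x + \<sigma> x + \<sigma> y = 0" by simp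
  then show "2 * (\<sigma> x + \<sigma> y) = 0" by (simp add: algebra_simps mult_2)
qed

lemma commute_imp_star_commute:
  assumes x: "x \<in> carrier G" and y: "y \<in> carrier G" and xy: "x \<otimes> y = y \<otimes> x"
  shows "star x \<otimes> y = y \<otimes> star x"
proof (cases "star x = x")
  case True
  then show ?thesis using xy by simp
next
  case nx: False
  have sx: "star x \<in> carrier G" using star_closed[OF x] .
  show ?thesis
  proof (cases "star y = y")
    case False
    with commuting_nonsym_mixed_products[OF x y nx False xy] show ?thesis by simp
  next
    case sy: True
    let ?z = "x \<otimes> y"
    have z: "?z \<in> carrier G" using x y by simp
    have nz: "star ?z \<noteq> ?z"
      using star_mult[OF x y] sy xy nx x y sx by auto
    have xz: "x \<otimes> ?z = ?z \<otimes> x" using x y xy by (metis m_assoc)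
    have "(star x \<otimes> y) \<otimes> x = star x \<otimes> ?z" using x y sx xy by (metis m_assoc)
    also have "\<dots> = ?z \<otimes> star x"
      using commuting_nonsym_mixed_products(1,3)[OF x z nx nz xz] star_mult[OF x y] sy by simp
    also have "\<dots> = (y \<otimes> star x) \<otimes> x"
      using x y sx xy nonsym_commute_star[OF x nx] by (metis m_assoc)
    finally show ?thesis using x y sx by simp
  qed
qed

lemma commute_iff_star_commute:
  assumes x: "x \<in> carrier G" and y: "y \<in> carrier G"
  shows "x \<otimes> y = y \<otimes> x \<longleftrightarrow> star x \<otimes> y = y \<otimes> star x"
  using commute_imp_star_commute[OF x y] commute_imp_star_commute[OF star_closed[OF x] y]
  by (auto simp: star_star[OF x])

end

theorem lemma3p4:
  fixes G :: "'g monoid" and star :: "'g \<Rightarrow> 'g" and \<sigma> :: "'g \<Rightarrow> 'r::comm_ring_1"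
  assumes grp: "group G"
    and char: "(2::'r) \<noteq> 0"
    and star_closed: "\<forall>x\<in>carrier G. star x \<in> carrier G"
    and star_mult: "\<forall>x\<in>carrier G. \<forall>y\<in>carrier G. star (x \<otimes>\<^bsub>G\<^esub> y) = star y \<otimes>\<^bsub>G\<^esub> star x"
    and star_star: "\<forall>x\<in>carrier G. star (star x) = x"
    and sigma_hom: "\<forall>x\<in>carrier G. \<forall>y\<in>carrier G. \<sigma> (x \<otimes>\<^bsub>G\<^esub> y) = \<sigma> x * \<sigma> y"
    and sigma_unit: "\<forall>x\<in>carrier G. \<sigma> x dvd 1"
    and sigma_nontriv: "\<exists>x\<in>carrier G. \<sigma> x \<noteq> 1"
    and compat: "\<forall>x\<in>carrier G. \<sigma> (x \<otimes>\<^bsub>G\<^esub> star x) = 1"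
    and anti: "S_anticomm G star \<sigma>"
  shows "(\<forall>x\<in>carrier G. \<forall>y\<in>carrier G.
            (x \<otimes>\<^bsub>G\<^esub> y = y \<otimes>\<^bsub>G\<^esub> x \<longleftrightarrow> star x \<otimes>\<^bsub>G\<^esub> y = y \<otimes>\<^bsub>G\<^esub> star x))
       \<and> (\<forall>x\<in>carrier G. \<forall>y\<in>carrier G.
            star x \<noteq> x \<longrightarrow> star y \<noteq> y \<longrightarrow> x \<otimes>\<^bsub>G\<^esub> y = y \<otimes>\<^bsub>G\<^esub> x \<longrightarrow>
              (x \<otimes>\<^bsub>G\<^esub> y = y \<otimes>\<^bsub>G\<^esub> x
               \<and> y \<otimes>\<^bsub>G\<^esub> x = star x \<otimes>\<^bsub>G\<^esub> star y
               \<and> star x \<otimes>\<^bsub>G\<^esub> star y = star y \<otimes>\<^bsub>G\<^esub> star x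
               \<and> x \<otimes>\<^bsub>G\<^esub> star y = star y \<otimes>\<^bsub>G\<^esub> x
               \<and> star y \<otimes>\<^bsub>G\<^esub> x = star x \<otimes>\<^bsub>G\<^esub> y
               \<and> star x \<otimes>\<^bsub>G\<^esub> y = y \<otimes>\<^bsub>G\<^esub> star x
               \<and> 2 * (1 + \<sigma> (x \<otimes>\<^bsub>G\<^esub> y)) = 0
               \<and> 2 * (\<sigma> x + \<sigma> y) = 0))"
proof -
  interpret anticommutative_span G star \<sigma>
    by (rule anticommutative_span.intro[OF grp], unfold_locales)
      (use char star_closed star_mult star_star sigma_unit anti in auto)
  show ?thesis
  proof ((rule conjI; intro ballI impI), goal_cases)
    case (1 x y)
    then show ?case by (rule commute_iff_star_commute)
  next
    case (2 x y)
    note eq = commuting_nonsym_eq_star_mult[OF 2] and mixed = commuting_nonsym_mixed_products[OF 2]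
    have "\<sigma> (x \<otimes>\<^bsub>G\<^esub> y) = \<sigma> x * \<sigma> y" using sigma_hom 2(1,2) by blast
    with eq(2) have sigma_eq: "2 * (1 + \<sigma> (x \<otimes>\<^bsub>G\<^esub> y)) = 0" by simp
    show ?case
      by (intro conjI) (fact 2(5) trans[OF 2(5)[symmetric] eq(1)]
          commute_imp_stars_commute[OF 2(1,2,5)] mixed(2)[symmetric] trans[OF mixed(2,1)]
          trans[OF mixed(1)[symmetric] mixed(3)] sigma_eq mixed(4))+
  qed
qed

end
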